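(* Let $R=\{(1,1),(2,1),(1,2),(1,3),(1,4)\}$. Then: (1) for all integers $n>1$, $\mathcal{S}(n)\subseteq R$; (2) for every $(\alpha,\beta)\in R$ there exists an $n$ with $(\alpha,\beta)\in\mathcal{S}(n)$; (3) the set of positive integers $n$ with $\mathcal{S}(n)=\{(1,1)\}$ has density $1$, i.e. $\lim_{N\to\infty}N^{-1}|\{n\le N:\mathcal{S}(n)=\{(1,1)\}\}|=1$.
   Context: For relatively prime positive integers $\alpha,\beta$ and positive integers $a_1,a_2$, the $(\alpha,\beta)$-walk $w^{\alpha,\beta}_k(a_1,a_2)$ is given by $w_1=a_1$, $w_2=a_2$, $w_{k+2}=\alpha w_{k+1}+\beta w_k$ ($k\ge1$). For a positive integer $n$, $s^{\alpha,\beta}(n;a_1,a_2)$ is the (largest) index $s$ with $w^{\alpha,\beta}_s(a_1,a_2)=n$ ($-\infty$ if none), and $s^{\alpha,\beta}(n)=\max_{a_1,a_2\ge1}s^{\alpha,\beta}(n;a_1,a_2)$. Define $\bar s(n)=\max\{s^{\alpha,\beta}(n):\alpha,\beta\ge1,\gcd(\alpha,\beta)=1\}$ and $\mathcal{S}(n)=\{(\alpha,\beta):\alpha,\beta\ge1,\ \gcd(\alpha,\beta)=1,\ s^{\alpha,\beta}(n)=\bar s(n)\}$. *)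

theory Defs
  imports Complex_Main "HOL-Library.Extended_Real"
begin

text \<open>The (alpha,beta)-walk, indexed from 1: walk al be a1 a2 1 = a1, walk al be a1 a2 2 = a2,
  w(k+2) = al * w(k+1) + be * w(k). Index 0 is unused (value 0).\<close>
fun walk :: "nat \<Rightarrow> nat \<Rightarrow> nat \<Rightarrow> nat \<Rightarrow> nat \<Rightarrow> nat" where
  "walk al be a1 a2 0 = 0"
| "walk al be a1 a2 (Suc 0) = a1"
| "walk al be a1 a2 (Suc (Suc 0)) = a2"
| "walk al be a1 a2 (Suc (Suc (Suc k))) =
     al * walk al be a1 a2 (Suc (Suc k)) + be * walk al be a1 a2 (Suc k)"

definition s_pt :: "nat \<Rightarrow> nat \<Rightarrow> nat \<Rightarrow> nat \<Rightarrow> nat \<Rightarrow> ereal" where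
  "s_pt al be n a1 a2 =
     (if {k. 1 \<le> k \<and> walk al be a1 a2 k = n} = {} then -\<infinity>
      else ereal (real (Max {k. 1 \<le> k \<and> walk al be a1 a2 k = n})))"

text \<open>s^{al,be}(n) = max over a1,a2 \<ge> 1 (written as a supremum; the maximum is attained).\<close>
definition s_ab :: "nat \<Rightarrow> nat \<Rightarrow> nat \<Rightarrow> ereal" where
  "s_ab al be n = (SUP p\<in>{(a1, a2). 1 \<le> a1 \<and> 1 \<le> a2}. s_pt al be n (fst p) (snd p))"

definition s_bar :: "nat \<Rightarrow> ereal" where
  "s_bar n = (SUP p\<in>{(al, be). 1 \<le> al \<and> 1 \<le> be \<and> coprime al be}. s_ab (fst p) (snd p) n)"

definition S_set :: "nat \<Rightarrow> (nat \<times> nat) set" where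
  "S_set n = {(al, be). 1 \<le> al \<and> 1 \<le> be \<and> coprime al be \<and> s_ab al be n = s_bar n}"

end

theory Submission
  imports Defs "HOL-Number_Theory.Cong" "HOL-Number_Theory.Fib"
begin

text \<open>
  Walks are linear in their initial values, and a walk reaching n at index K can be restarted at
  index K - m + 1. Hence for n \<ge> 1 the value s^{al,be}(n) is at least m exactly when
  n = A x + B y with x, y \<ge> 1, where A and B are the values at index m of the walks started at
  (1, 0) and (0, 1). For (1, 1) these are consecutive Fibonacci numbers, which are coprime, so
  every n > F_k F_(k+1) is reached at index k + 2.

  If (al, be) is not one of the five candidates, it dominates (3, 1), (2, 2) or (1, 5), and for
  these the products F_k F_(k+1) satisfy the walk recurrence with \<le>; so the walk from (1, 1)
  exceeds F_k F_(k+1) at index k + 1, and the Fibonacci walk reaches n one step later than any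
  (al, be)-walk. This gives (1); (2) is a finite computation with explicit certificates of
  non-representability.

  If S(n) \<noteq> {(1, 1)} and n > F_k F_(k+1), then n is a positive combination of the two basic
  walks at index k + 2 of one of the four other candidates. Those two values are at least
  2^(k-1), so at most 4 (N / 2^(k-1))^2 numbers up to N arise this way, while F_k F_(k+1) \<le> 3^(k-1).
  For k = 2i + 1 and 12^i \<le> N < 12^(i+1) both counts are O((3/4)^i N).
\<close>

section \<open>Walks\<close>

lemma walk_linear: "walk al be a1 a2 k = a1 * walk al be 1 0 k + a2 * walk al be 0 1 k"
  by (induction al be a1 a2 k rule: walk.induct) (auto simp: algebra_simps)

lemma walk_lower_bounds:
  assumes "1 \<le> al" "1 \<le> be" "1 \<le> a1" "1 \<le> a2" "1 \<le> k"
  shows "1 \<le> walk al be a1 a2 k \<and> k \<le> walk al be a1 a2 k + 1"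
  using assms
proof (induction al be a1 a2 k rule: walk.induct)
  case (4 al be a1 a2 k)
  let ?w = "walk al be a1 a2"
  have "?w (Suc (Suc k)) \<le> al * ?w (Suc (Suc k))" "?w (Suc k) \<le> be * ?w (Suc k)"
    using "4.prems" by simp_all
  moreover have "Suc k \<le> ?w (Suc (Suc k))" "1 \<le> ?w (Suc k)"
    using "4.IH" "4.prems" by auto
  ultimately show ?case
    unfolding walk.simps by linarith
qed auto

lemma walk_mono:
  assumes "al \<le> al'" "be \<le> be'" "a1 \<le> a1'" "a2 \<le> a2'"
  shows "walk al be a1 a2 k \<le> walk al' be' a1' a2' k"
  using assms
proof (induction al be a1 a2 k rule: walk.induct)
  case (4 al be a1 a2 k)
  then show ?case by (auto intro: add_mono mult_mono)
qed auto

lemma walk_Suc_Suc: "walk al be a1 a2 (Suc (Suc k)) = walk al be a2 (al * a2 + be * a1) (Suc k)"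
proof (induction k rule: fib.induct)
  case (3 k)
  then show ?case by (cases k) auto
qed auto

lemma walk_shift:
  "walk al be a1 a2 (Suc (k + d))
    = walk al be (walk al be a1 a2 (Suc d)) (walk al be a1 a2 (Suc (Suc d))) (Suc k)"
proof (induction d arbitrary: a1 a2)
  case (Suc d)
  show ?case
    using Suc[of a2 "al * a2 + be * a1"] by (simp add: walk_Suc_Suc)
qed simp

lemma walk_one: "walk al be a1 a2 1 = a1"
  by simp

lemma walk_numeral:
  assumes "n \<noteq> Num.One"
  shows "walk al be a1 a2 (numeral n) = walk al be a2 (al * a2 + be * a1) (pred_numeral n)"
proof -
  obtain k where "pred_numeral n = Suc k"
    using assms by (cases n) auto
  then show ?thesis
    by (simp add: numeral_eq_Suc walk_Suc_Suc)
qed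

lemma walk_fib: "walk 1 1 a1 a2 (Suc (Suc k)) = fib k * a1 + fib (Suc k) * a2"
  by (induction k rule: fib.induct) (auto simp: algebra_simps)

section \<open>Positive combinations\<close>

definition pos_combinations :: "nat \<Rightarrow> nat \<Rightarrow> nat set" where
  "pos_combinations A B = {A * x + B * y | x y. 1 \<le> x \<and> 1 \<le> y}"

lemma pos_combinations_ge: "n \<in> pos_combinations A B \<Longrightarrow> A + B \<le> n"
  unfolding pos_combinations_def by (auto intro: add_mono)

lemma in_pos_combinations_if_gt_prod:
  assumes "coprime A B" "1 \<le> A" "1 \<le> B" "A * B < n"
  shows "n \<in> pos_combinations A B"
proof -
  obtain u where u: "[B * u = 1] (mod A)"
    using cong_solve_coprime_nat[of B A] assms(1) by (auto simp: coprime_commute)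
  define y where "y = (if (n * u) mod A = 0 then A else (n * u) mod A)"
  have y: "1 \<le> y" "y \<le> A" "[y = n * u] (mod A)"
    using assms(2) unfolding y_def cong_def by auto
  have "[B * y = B * (n * u)] (mod A)"
    using y(3) by (rule cong_mult[OF cong_refl])
  also have "[B * (n * u) = n * (B * u)] (mod A)"
    by (simp add: ac_simps)
  also have "[n * (B * u) = n * 1] (mod A)"
    using u by (rule cong_mult[OF cong_refl])
  finally have "[B * y = n] (mod A)"
    by simp
  moreover have By: "B * y < n"
    using mult_le_mono2[OF y(2), of B] assms(4) by (simp only: mult.commute[of B A])
  ultimately have "A dvd n - B * y"
    by (simp add: cong_altdef_nat cong_sym_eq)
  then obtain x where x: "n - B * y = A * x" ..
  then have "1 \<le> x"
    using By by (cases x) auto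
  with x y By show ?thesis
    unfolding pos_combinations_def by force
qed

text \<open>
  Since u inverts A modulo B, every representation n = A x + B y has x \<equiv> n u \<equiv> r (mod B),
  hence x \<ge> r.
\<close>

lemma not_in_pos_combinations_by_certificate:
  assumes "[A * u = 1] (mod B)" "[r = n * u] (mod B)" "1 \<le> r" "r \<le> B" "n < A * r + B"
  shows "n \<notin> pos_combinations A B"
proof
  assume "n \<in> pos_combinations A B"
  then obtain x y where xy: "1 \<le> x" "1 \<le> y" "n = A * x + B * y"
    unfolding pos_combinations_def by blast
  have "n * u = x * (A * u) + B * (y * u)"
    unfolding xy(3) by (simp add: algebra_simps)
  then have "[n * u = x * (A * u)] (mod B)"
    by (simp add: cong_def)
  also have "[x * (A * u) = x * 1] (mod B)"
    using assms(1) by (rule cong_mult[OF cong_refl])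
  finally have "[x = r] (mod B)"
    using cong_sym cong_trans assms(2) by (metis mult_1_right)
  have "r \<le> x"
  proof (rule ccontr)
    assume "\<not> r \<le> x"
    then have "B dvd r - x" "0 < r - x" "r - x < B"
      using \<open>[x = r] (mod B)\<close> xy(1) assms(4) by (auto simp: cong_altdef_nat cong_sym_eq)
    then show False
      using dvd_imp_le by fastforce
  qed
  then have "A * r + B \<le> n"
    using xy by (auto intro: add_mono)
  with assms(5) show False
    by simp
qed

lemma card_pos_combinations_le:
  assumes "1 \<le> A" "1 \<le> B"
  shows "card ({..N} \<inter> pos_combinations A B) \<le> (N div A) * (N div B)"
proof -
  let ?f = "\<lambda>(x, y). A * x + B * y"
  have "{..N} \<inter> pos_combinations A B \<subseteq> ?f ` ({1..N div A} \<times> {1..N div B})"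
  proof
    fix n assume "n \<in> {..N} \<inter> pos_combinations A B"
    then obtain x y where xy: "1 \<le> x" "1 \<le> y" "n = A * x + B * y" "n \<le> N"
      unfolding pos_combinations_def by blast
    then have "x \<le> N div A" "y \<le> N div B"
      using assms by (simp_all add: less_eq_div_iff_mult_less_eq mult.commute)
    with xy show "n \<in> ?f ` ({1..N div A} \<times> {1..N div B})"
      by force
  qed
  then have "card ({..N} \<inter> pos_combinations A B) \<le> card (?f ` ({1..N div A} \<times> {1..N div B}))"
    by (intro card_mono) auto
  also have "\<dots> \<le> card ({1..N div A} \<times> {1..N div B})"
    by (rule card_image_le) simp
  finally show ?thesis
    by (simp add: card_cartesian_product)
qed

section \<open>The largest index at which a walk reaches n\<close>

definition walk_indices :: "nat \<Rightarrow> nat \<Rightarrow> nat \<Rightarrow> nat set" where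
  "walk_indices al be n =
    {k. 1 \<le> k \<and> (\<exists>a1 a2. 1 \<le> a1 \<and> 1 \<le> a2 \<and> walk al be a1 a2 k = n)}"

definition max_index :: "nat \<Rightarrow> nat \<Rightarrow> nat \<Rightarrow> nat" where
  "max_index al be n = Max (walk_indices al be n)"

lemma finite_walk_indices:
  assumes "1 \<le> al" "1 \<le> be"
  shows "finite (walk_indices al be n)"
proof (rule finite_subset)
  show "walk_indices al be n \<subseteq> {..n + 1}"
    using walk_lower_bounds[OF assms] unfolding walk_indices_def by fastforce
qed simp

lemma two_in_walk_indices: "1 \<le> n \<Longrightarrow> 2 \<in> walk_indices al be n"
  unfolding walk_indices_def by (force simp: numeral_2_eq_2)

lemma max_index_ge:
  assumes "1 \<le> al" "1 \<le> be" "1 \<le> a1" "1 \<le> a2" "1 \<le> k" "walk al be a1 a2 k = n"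
  shows "k \<le> max_index al be n"
  unfolding max_index_def
  by (rule Max_ge[OF finite_walk_indices[OF assms(1,2)]])
    (use assms in \<open>auto simp: walk_indices_def\<close>)

lemma max_index_attained:
  assumes "1 \<le> al" "1 \<le> be" "1 \<le> n"
  obtains a1 a2 where "1 \<le> a1" "1 \<le> a2" "1 \<le> max_index al be n"
    "walk al be a1 a2 (max_index al be n) = n"
proof -
  have "max_index al be n \<in> walk_indices al be n"
    unfolding max_index_def using finite_walk_indices[OF assms(1,2)] two_in_walk_indices[OF assms(3)]
    by (intro Max_in) auto
  then show ?thesis
    using that unfolding walk_indices_def by blast
qed

lemma le_max_index_iff:
  assumes "1 \<le> al" "1 \<le> be" "1 \<le> n" "1 \<le> m"
  shows "m \<le> max_index al be n \<longleftrightarrow>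
    n \<in> pos_combinations (walk al be 1 0 m) (walk al be 0 1 m)"
proof
  assume le: "m \<le> max_index al be n"
  define d where "d = max_index al be n - m"
  have max: "max_index al be n = Suc (m - 1 + d)"
    using le assms(4) unfolding d_def by simp
  obtain a1 a2 where a: "1 \<le> a1" "1 \<le> a2" "walk al be a1 a2 (max_index al be n) = n"
    using max_index_attained[OF assms(1-3)] by blast
  define b1 b2 where "b1 = walk al be a1 a2 (Suc d)" and "b2 = walk al be a1 a2 (Suc (Suc d))"
  have "1 \<le> b1" "1 \<le> b2"
    unfolding b1_def b2_def using walk_lower_bounds[OF assms(1,2) a(1,2)] by simp_all
  moreover have "walk al be b1 b2 (Suc (m - 1)) = n"
    using a(3) unfolding max b1_def b2_def walk_shift .
  then have "walk al be 1 0 m * b1 + walk al be 0 1 m * b2 = n"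
    using assms(4) by (simp add: walk_linear[of al be b1 b2 m] mult.commute)
  ultimately show "n \<in> pos_combinations (walk al be 1 0 m) (walk al be 0 1 m)"
    unfolding pos_combinations_def by auto
next
  assume "n \<in> pos_combinations (walk al be 1 0 m) (walk al be 0 1 m)"
  then obtain x y where "1 \<le> x" "1 \<le> y" "walk al be 1 0 m * x + walk al be 0 1 m * y = n"
    unfolding pos_combinations_def by blast
  then show "m \<le> max_index al be n"
    by (intro max_index_ge[OF assms(1,2), of x y])
      (use assms(4) in \<open>simp_all add: walk_linear[of al be x y m] mult.commute\<close>)
qed

lemma max_index_le_if_small:
  assumes "1 \<le> al" "1 \<le> be" "1 \<le> n" "n < walk al be 1 1 (Suc K)"
  shows "max_index al be n \<le> K"
proof (rule ccontr)
  assume "\<not> max_index al be n \<le> K"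
  then have "n \<in> pos_combinations (walk al be 1 0 (Suc K)) (walk al be 0 1 (Suc K))"
    using le_max_index_iff[OF assms(1-3), of "Suc K"] by simp
  then have "walk al be 1 1 (Suc K) \<le> n"
    using pos_combinations_ge walk_linear[of al be 1 1 "Suc K"] by simp
  with assms(4) show False
    by simp
qed

lemma max_index_le_by_certificate:
  assumes "1 \<le> al" "1 \<le> be" "1 \<le> n"
    and "walk al be 1 0 (Suc K) = A" "walk al be 0 1 (Suc K) = B"
    and "[A * u = 1] (mod B)" "[r = n * u] (mod B)" "1 \<le> r" "r \<le> B" "n < A * r + B"
  shows "max_index al be n \<le> K"
proof -
  have "\<not> Suc K \<le> max_index al be n"
    using not_in_pos_combinations_by_certificate[OF assms(6-10)]
      le_max_index_iff[OF assms(1-3), of "Suc K"] assms(4,5) by simp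
  then show ?thesis
    by simp
qed

lemma Suc_Suc_le_max_index_1_1:
  assumes "1 \<le> k" "fib k * fib (Suc k) < n"
  shows "Suc (Suc k) \<le> max_index 1 1 n"
proof -
  have "n \<in> pos_combinations (fib k) (fib (Suc k))"
    using coprime_fib_Suc_nat fib_neq_0_nat[of k] fib_neq_0_nat[of "Suc k"] assms
    by (intro in_pos_combinations_if_gt_prod) auto
  then show ?thesis
    using assms(2) walk_fib[of 1 0 k] walk_fib[of 0 1 k] by (subst le_max_index_iff) auto
qed

lemma s_ab_eq_max_index:
  assumes "1 \<le> al" "1 \<le> be" "1 \<le> n"
  shows "s_ab al be n = ereal (max_index al be n)"
proof (rule antisym)
  show "s_ab al be n \<le> ereal (max_index al be n)"
    unfolding s_ab_def
  proof (rule SUP_least, clarify)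
    fix a1 a2 :: nat
    assume "1 \<le> a1" "1 \<le> a2"
    then have "{k. 1 \<le> k \<and> walk al be a1 a2 k = n} \<subseteq> walk_indices al be n"
      unfolding walk_indices_def by blast
    then have "Max {k. 1 \<le> k \<and> walk al be a1 a2 k = n} \<le> max_index al be n"
      if "{k. 1 \<le> k \<and> walk al be a1 a2 k = n} \<noteq> {}"
      unfolding max_index_def using that finite_walk_indices[OF assms(1,2)] by (rule Max_mono)
    then show "s_pt al be n (fst (a1, a2)) (snd (a1, a2)) \<le> ereal (max_index al be n)"
      unfolding s_pt_def by auto
  qed
next
  obtain a1 a2 where a: "1 \<le> a1" "1 \<le> a2" "1 \<le> max_index al be n"
    "walk al be a1 a2 (max_index al be n) = n"
    using max_index_attained[OF assms] .
  have "finite {k. 1 \<le> k \<and> walk al be a1 a2 k = n}"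
    by (rule finite_subset[OF _ finite_walk_indices[OF assms(1,2), of n]])
      (use a in \<open>auto simp: walk_indices_def\<close>)
  then have "ereal (max_index al be n) \<le> s_pt al be n a1 a2"
    unfolding s_pt_def using a by auto
  also have "\<dots> \<le> s_ab al be n"
    unfolding s_ab_def by (rule SUP_upper2[of "(a1, a2)"]) (use a in auto)
  finally show "ereal (max_index al be n) \<le> s_ab al be n" .
qed

lemma S_set_iff:
  assumes "1 \<le> n"
  shows "(al, be) \<in> S_set n \<longleftrightarrow> 1 \<le> al \<and> 1 \<le> be \<and> coprime al be \<and>
    (\<forall>a b. 1 \<le> a \<longrightarrow> 1 \<le> b \<longrightarrow> coprime a b \<longrightarrow> max_index a b n \<le> max_index al be n)"
proof -
  have "s_ab al be n = s_bar n \<longleftrightarrow>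
      (\<forall>a b. 1 \<le> a \<longrightarrow> 1 \<le> b \<longrightarrow> coprime a b \<longrightarrow> max_index a b n \<le> max_index al be n)"
    if v: "1 \<le> al" "1 \<le> be" "coprime al be"
  proof -
    have "s_ab al be n \<le> s_bar n"
      unfolding s_bar_def by (rule SUP_upper2[of "(al, be)"]) (use v in auto)
    then have "s_ab al be n = s_bar n \<longleftrightarrow> s_bar n \<le> s_ab al be n"
      by auto
    also have "\<dots> \<longleftrightarrow>
        (\<forall>a b. 1 \<le> a \<longrightarrow> 1 \<le> b \<longrightarrow> coprime a b \<longrightarrow> s_ab a b n \<le> s_ab al be n)"
      unfolding s_bar_def by (auto simp: SUP_le_iff)
    finally show ?thesis
      using v assms by (auto simp: s_ab_eq_max_index)
  qed
  then show ?thesis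
    unfolding S_set_def by auto
qed

section \<open>Fibonacci products versus the other walks\<close>

lemma linear_recurrence_dominates:
  fixes p w :: "nat \<Rightarrow> nat"
  assumes "1 \<le> al"
    and w_rec: "\<And>k. i \<le> k \<Longrightarrow> w (Suc (Suc k)) = al * w (Suc k) + be * w k"
    and p_rec: "\<And>k. i \<le> k \<Longrightarrow> p (Suc (Suc k)) \<le> al * p (Suc k) + be * p k"
    and base: "p i < w i" "p (Suc i) < w (Suc i)"
    and "i \<le> k"
  shows "p k < w k"
proof -
  have "p k < w k \<and> p (Suc k) < w (Suc k)"
    using \<open>i \<le> k\<close>
  proof (induction k rule: dec_induct)
    case (step k)
    have "p (Suc (Suc k)) \<le> al * p (Suc k) + be * p k"
      using p_rec step.hyps by simp
    also have "\<dots> < al * w (Suc k) + be * w k"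
      using step.IH assms(1) by (intro add_less_le_mono mult_less_mono2 mult_le_mono2) auto
    also have "\<dots> = w (Suc (Suc k))"
      using w_rec step.hyps by simp
    finally show ?case
      using step.IH by simp
  qed (use base in simp)
  then show ?thesis ..
qed

lemma fib_Suc_le_double: "1 \<le> k \<Longrightarrow> fib (Suc k) \<le> 2 * fib k"
  by (cases k) (simp_all add: fib_Suc_mono)

lemma fib_prod_Suc_le:
  assumes "1 \<le> k"
  shows "fib (Suc k) * fib (Suc (Suc k)) \<le> 3 * (fib k * fib (Suc k))"
proof -
  have "fib (Suc (Suc k)) \<le> 3 * fib k"
    using fib_Suc_le_double[OF assms] by simp
  then show ?thesis
    using mult_le_mono2 by (simp add: ac_simps)
qed

lemma fib_prod_le_pow3: "1 \<le> k \<Longrightarrow> fib k * fib (Suc k) \<le> 3 ^ (k - 1)"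
proof (induction k rule: dec_induct)
  case (step k)
  have "fib (Suc k) * fib (Suc (Suc k)) \<le> 3 * (fib k * fib (Suc k))"
    using step.hyps(1) by (rule fib_prod_Suc_le)
  also have "\<dots> \<le> 3 * 3 ^ (k - 1)"
    using step.IH by simp
  also have "\<dots> = 3 ^ (Suc k - 1)"
    using step.hyps(1) by (cases k) auto
  finally show ?case .
qed simp

lemma fib_prod_recurrence_le:
  assumes "(a0, b0) \<in> {(3, 1), (2, 2), (1, 5)}" "1 \<le> k"
  shows "fib (Suc (Suc k)) * fib (Suc (Suc (Suc k)))
    \<le> a0 * (fib (Suc k) * fib (Suc (Suc k))) + b0 * (fib k * fib (Suc k))"
proof -
  define a b where "a = fib k" and "b = fib (Suc k)"
  have fib_a_b: "fib (Suc (Suc k)) = a + b" "fib (Suc (Suc (Suc k))) = a + 2 * b"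
    unfolding a_def b_def by simp_all
  have "a \<le> b"
    unfolding a_def b_def by (rule fib_Suc_mono)
  from assms(1) consider "a0 = 3" "b0 = 1" | "a0 = 2" "b0 = 2" | "a0 = 1" "b0 = 5"
    by auto
  then show ?thesis
  proof cases
    case 1
    have "fib (Suc (Suc k)) * fib (Suc (Suc (Suc k))) \<le> 3 * (fib (Suc k) * fib (Suc (Suc k)))"
      by (rule fib_prod_Suc_le) simp
    then show ?thesis
      unfolding 1 by linarith
  next
    case 2
    have "a * a \<le> a * b"
      using \<open>a \<le> b\<close> by simp
    then show ?thesis
      unfolding 2 fib_a_b a_def[symmetric] b_def[symmetric] by (simp add: algebra_simps)
  next
    case 3
    obtain c where c: "b = a + c" "c \<le> a"
      using \<open>a \<le> b\<close> fib_Suc_le_double[OF assms(2)] unfolding a_def b_def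
      by (metis le_add_diff_inverse mult_2 add_le_cancel_left)
    have "c * c \<le> a * c"
      using c(2) by (rule mult_le_mono1)
    then show ?thesis
      unfolding 3 fib_a_b a_def[symmetric] b_def[symmetric] c(1)
      by (simp add: algebra_simps) (use \<open>c * c \<le> a * c\<close> in linarith)
  qed
qed

definition candidate_pairs :: "(nat \<times> nat) set" where
  "candidate_pairs = {(1, 1), (2, 1), (1, 2), (1, 3), (1, 4)}"

lemma dominates_minimal_non_candidate:
  assumes "1 \<le> al" "1 \<le> be" "(al, be) \<notin> candidate_pairs"
  obtains a0 b0 where "(a0, b0) \<in> {(3, 1), (2, 2), (1, 5)}" "a0 \<le> al" "b0 \<le> be"
proof -
  have "3 \<le> al \<or> (2 \<le> al \<and> 2 \<le> be) \<or> 5 \<le> be"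
    using assms unfolding candidate_pairs_def by fastforce
  then show ?thesis
    using that assms(1,2) by fastforce
qed

lemma fib_prod_lt_walk:
  assumes "1 \<le> al" "1 \<le> be" "(al, be) \<notin> candidate_pairs" "2 \<le> k"
  shows "fib k * fib (Suc k) < walk al be 1 1 (Suc k)"
proof -
  obtain a0 b0 where ab0: "(a0, b0) \<in> {(3, 1), (2, 2), (1, 5)}" "a0 \<le> al" "b0 \<le> be"
    using dominates_minimal_non_candidate[OF assms(1-3)] .
  let ?p = "\<lambda>j. fib j * fib (Suc j)"
  have p_rec: "?p (Suc (Suc j)) \<le> al * ?p (Suc j) + be * ?p j" if "2 \<le> j" for j
  proof -
    have "?p (Suc (Suc j)) \<le> a0 * ?p (Suc j) + b0 * ?p j"
      using fib_prod_recurrence_le[OF ab0(1)] that by simp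
    also have "\<dots> \<le> al * ?p (Suc j) + be * ?p j"
      using ab0(2,3) by (intro add_mono mult_le_mono1)
    finally show ?thesis .
  qed
  have "?p 2 < walk a0 b0 1 1 3" "?p 3 < walk a0 b0 1 1 4"
    using ab0(1) by (auto simp: walk_numeral numeral_eq_Suc)
  moreover have "walk a0 b0 1 1 3 \<le> walk al be 1 1 3" "walk a0 b0 1 1 4 \<le> walk al be 1 1 4"
    using ab0(2,3) by (simp_all add: walk_mono)
  ultimately have base: "?p 2 < walk al be 1 1 (Suc 2)" "?p (Suc 2) < walk al be 1 1 (Suc (Suc 2))"
    by simp_all
  show ?thesis
  proof (rule linear_recurrence_dominates
      [where p = ?p and w = "\<lambda>j. walk al be 1 1 (Suc j)" and i = 2])
    show "?p (Suc (Suc j)) \<le> al * ?p (Suc j) + be * ?p j" if "2 \<le> j" for j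
      using that by (rule p_rec)
  qed (use assms(1,4) base in simp_all)
qed

text \<open>
  The value n is at least the walk from (1, 1) at index K = max_index al be n, which exceeds
  F_(K-1) F_K; so the Fibonacci walk reaches n at index K + 1.
\<close>

lemma max_index_lt_max_index_1_1:
  assumes "1 \<le> al" "1 \<le> be" "(al, be) \<notin> candidate_pairs" "2 \<le> n"
  shows "max_index al be n < max_index 1 1 n"
proof (cases "max_index al be n \<le> 2")
  case True
  moreover have "3 \<le> max_index 1 1 n"
    using Suc_Suc_le_max_index_1_1[of 1 n] assms(4) by (simp add: numeral_eq_Suc)
  ultimately show ?thesis
    by simp
next
  case False
  define k where "k = max_index al be n - 1"
  have k: "max_index al be n = Suc k" "2 \<le> k"
    using False unfolding k_def by simp_all
  obtain a1 a2 where a: "1 \<le> a1" "1 \<le> a2" "walk al be a1 a2 (Suc k) = n"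
    using max_index_attained[of al be n] assms(1,2,4) k(1) by auto
  have "fib k * fib (Suc k) < walk al be 1 1 (Suc k)"
    using fib_prod_lt_walk[OF assms(1-3) k(2)] .
  also have "\<dots> \<le> n"
    using walk_mono[of al al be be 1 a1 1 a2 "Suc k"] a by simp
  finally have "Suc (Suc k) \<le> max_index 1 1 n"
    using k(2) by (intro Suc_Suc_le_max_index_1_1) auto
  with k(1) show ?thesis
    by simp
qed

section \<open>Optimal pairs\<close>

lemma S_set_subset_candidate_pairs:
  assumes "2 \<le> n"
  shows "S_set n \<subseteq> candidate_pairs"
proof
  fix p assume p: "p \<in> S_set n"
  obtain al be where [simp]: "p = (al, be)"
    by fastforce
  have "1 \<le> al" "1 \<le> be" "max_index 1 1 n \<le> max_index al be n"
    using p assms by (auto simp: S_set_iff)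
  then show "p \<in> candidate_pairs"
    using max_index_lt_max_index_1_1 assms by fastforce
qed

lemma in_S_set_if_candidates_le:
  assumes "2 \<le> n" "1 \<le> al" "1 \<le> be" "coprime al be" "K \<le> max_index al be n"
    and "\<forall>(a, b) \<in> candidate_pairs. max_index a b n \<le> K"
  shows "(al, be) \<in> S_set n"
proof -
  have "max_index a b n \<le> max_index al be n" if "1 \<le> a" "1 \<le> b" for a b
  proof (cases "(a, b) \<in> candidate_pairs")
    case True
    then show ?thesis
      using assms(5,6) by auto
  next
    case False
    have "max_index 1 1 n \<le> K"
      using assms(6) by (auto simp: candidate_pairs_def)
    then show ?thesis
      using max_index_lt_max_index_1_1[OF that False assms(1)] assms(5) by linarith
  qed
  then show ?thesis
    using assms(1-4) by (simp add: S_set_iff)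
qed

lemma S_set_eq_1_1_if_candidates_less:
  assumes "2 \<le> n"
    and "\<forall>(a, b) \<in> candidate_pairs - {(1, 1)}. max_index a b n < max_index 1 1 n"
  shows "S_set n = {(1, 1)}"
proof -
  have less: "max_index a b n < max_index 1 1 n"
    if "1 \<le> a" "1 \<le> b" "(a, b) \<noteq> (1, 1)" for a b
    using assms(2) max_index_lt_max_index_1_1[OF that(1,2) _ assms(1)] that(3) by blast
  have "(1, 1) \<in> S_set n"
  proof -
    have "max_index a b n \<le> max_index 1 1 n" if "1 \<le> a" "1 \<le> b" for a b
      using less[OF that] by (cases "(a, b) = (1, 1)") auto
    then show ?thesis
      using assms(1) by (simp add: S_set_iff)
  qed
  moreover have "p = (1, 1)" if "p \<in> S_set n" for p
  proof -
    obtain a b where p: "p = (a, b)"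
      by fastforce
    have "1 \<le> a" "1 \<le> b" "max_index 1 1 n \<le> max_index a b n"
      using that assms(1) unfolding p by (simp_all add: S_set_iff)
    then show ?thesis
      using less[of a b] p by fastforce
  qed
  ultimately show ?thesis
    by blast
qed

text \<open>
  In the witnesses below, the walks with coefficients (1, 1) are evaluated without One_nat_def:
  otherwise the coefficients become Suc 0 and the evaluation runs in unary.
\<close>

lemma pair_1_1_in_S_set_2: "(1, 1) \<in> S_set 2"
proof (rule in_S_set_if_candidates_le[where K = 3])
  show "3 \<le> max_index 1 1 2"
    by (rule max_index_ge[of _ _ 1 1]) (simp_all add: walk_numeral)
  have "max_index 1 1 2 \<le> 3" "max_index 2 1 2 \<le> 3" "max_index 1 2 2 \<le> 3"
    "max_index 1 3 2 \<le> 3" "max_index 1 4 2 \<le> 3"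
    by (rule max_index_le_if_small; simp add: walk_numeral)+
  then show "\<forall>(a, b) \<in> candidate_pairs. max_index a b 2 \<le> 3"
    by (simp add: candidate_pairs_def)
qed simp_all

lemma pair_2_1_in_S_set_239: "(2, 1) \<in> S_set 239"
proof (rule in_S_set_if_candidates_le[where K = 8])
  show "8 \<le> max_index 2 1 239"
    by (rule max_index_ge[of _ _ 1 1]) (simp_all add: walk_numeral)
  have "max_index 1 1 239 \<le> 8"
    by (rule max_index_le_by_certificate[where A = 13 and B = 21 and u = 13 and r = 20])
      (simp_all del: One_nat_def add: walk_numeral walk_one cong_def)
  moreover have "max_index 1 2 239 \<le> 8"
    by (rule max_index_le_by_certificate[where A = 86 and B = 85 and u = 1 and r = 69])
      (simp_all add: walk_numeral cong_def)
  moreover have "max_index 2 1 239 \<le> 8" "max_index 1 3 239 \<le> 8" "max_index 1 4 239 \<le> 8"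
    by (rule max_index_le_if_small; simp add: walk_numeral)+
  ultimately show "\<forall>(a, b) \<in> candidate_pairs. max_index a b 239 \<le> 8"
    by (simp add: candidate_pairs_def)
qed simp_all

lemma pair_1_2_in_S_set_32: "(1, 2) \<in> S_set 32"
proof (rule in_S_set_if_candidates_le[where K = 6])
  show "6 \<le> max_index 1 2 32"
    by (rule max_index_ge[of _ _ 1 2]) (simp_all add: walk_numeral)
  have "max_index 1 1 32 \<le> 6"
    by (rule max_index_le_by_certificate[where A = 5 and B = 8 and u = 5 and r = 8])
      (simp_all del: One_nat_def add: walk_numeral walk_one cong_def)
  moreover have "max_index 2 1 32 \<le> 6" "max_index 1 2 32 \<le> 6" "max_index 1 3 32 \<le> 6"
    "max_index 1 4 32 \<le> 6"
    by (rule max_index_le_if_small; simp add: walk_numeral)+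
  ultimately show "\<forall>(a, b) \<in> candidate_pairs. max_index a b 32 \<le> 6"
    by (simp add: candidate_pairs_def)
qed simp_all

lemma pair_1_3_in_S_set_40: "(1, 3) \<in> S_set 40"
proof (rule in_S_set_if_candidates_le[where K = 6])
  show "6 \<le> max_index 1 3 40"
    by (rule max_index_ge[of _ _ 1 1]) (simp_all add: walk_numeral)
  have "max_index 1 1 40 \<le> 6"
    by (rule max_index_le_by_certificate[where A = 5 and B = 8 and u = 5 and r = 8])
      (simp_all del: One_nat_def add: walk_numeral walk_one cong_def)
  moreover have "max_index 2 1 40 \<le> 6" "max_index 1 2 40 \<le> 6" "max_index 1 3 40 \<le> 6"
    "max_index 1 4 40 \<le> 6"
    by (rule max_index_le_if_small; simp add: walk_numeral)+
  ultimately show "\<forall>(a, b) \<in> candidate_pairs. max_index a b 40 \<le> 6"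
    by (simp add: candidate_pairs_def)
qed simp_all

lemma pair_1_4_in_S_set_5307721328585529: "(1, 4) \<in> S_set 5307721328585529"
proof (rule in_S_set_if_candidates_le[where K = 40])
  show "40 \<le> max_index 1 4 5307721328585529"
    by (rule max_index_ge[of _ _ 1 1]) (simp_all add: walk_numeral)
  have "max_index 1 1 5307721328585529 \<le> 40"
    by (rule max_index_le_by_certificate[where A = 63245986 and B = 102334155
          and u = 63245986 and r = 101682819])
      (simp_all del: One_nat_def add: walk_numeral walk_one cong_def)
  moreover have "max_index 2 1 5307721328585529 \<le> 40"
    by (rule max_index_le_by_certificate[where A = 299713796309065 and B = 723573111879672
          and u = 299713796309065 and r = 677885750518689])
      (simp_all add: walk_numeral cong_def)
  moreover have "max_index 1 2 5307721328585529 \<le> 40"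
    by (rule max_index_le_by_certificate[where A = 366503875926 and B = 366503875925
          and u = 1 and r = 12197439679])
      (simp_all add: walk_numeral cong_def)
  moreover have "max_index 1 3 5307721328585529 \<le> 40"
    by (rule max_index_le_by_certificate[where A = 111676809902268 and B = 85722212350663
          and u = 44390082241922 and r = 13286448643510])
      (simp_all add: walk_numeral cong_def)
  moreover have "max_index 1 4 5307721328585529 \<le> 40"
    by (rule max_index_le_if_small) (simp_all add: walk_numeral)
  ultimately show "\<forall>(a, b) \<in> candidate_pairs. max_index a b 5307721328585529 \<le> 40"
    by (simp add: candidate_pairs_def)
qed simp_all

section \<open>Density of the n with S(n) = {(1, 1)}\<close>

lemma walk_ge_pow2:
  assumes "1 \<le> al" "1 \<le> be" "2 \<le> al \<or> 2 \<le> be"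
    and "1 \<le> walk al be a1 a2 3" "2 \<le> walk al be a1 a2 4"
  shows "2 ^ k \<le> walk al be a1 a2 (Suc (Suc (Suc k)))"
proof -
  let ?w = "walk al be a1 a2"
  have "2 ^ k \<le> ?w (Suc (Suc (Suc k))) \<and> 2 ^ Suc k \<le> ?w (Suc (Suc (Suc (Suc k))))"
  proof (induction k)
    case 0
    then show ?case
      using assms(4,5) by (simp add: numeral_eq_Suc)
  next
    case (Suc k)
    define x y where "x = ?w (Suc (Suc (Suc k)))" and "y = ?w (Suc (Suc (Suc (Suc k))))"
    have IH: "2 ^ k \<le> x" "2 * 2 ^ k \<le> y"
      using Suc.IH unfolding x_def y_def by simp_all
    have "4 * 2 ^ k \<le> al * y + be * x"
      using assms(3)
    proof
      assume "2 \<le> al"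
      then have "2 * y \<le> al * y"
        by (rule mult_le_mono1)
      then show ?thesis
        using IH by linarith
    next
      assume "2 \<le> be"
      then have "2 * x \<le> be * x"
        by (rule mult_le_mono1)
      moreover have "y \<le> al * y"
        using assms(1) by simp
      ultimately show ?thesis
        using IH by linarith
    qed
    moreover have "?w (Suc (Suc (Suc (Suc (Suc k))))) = al * y + be * x"
      unfolding x_def y_def by simp
    ultimately show ?case
      using IH unfolding y_def[symmetric] by simp
  qed
  then show ?thesis ..
qed

lemma card_candidate_combinations_le:
  assumes "(a, b) \<in> candidate_pairs - {(1, 1)}"
  shows "card ({..N} \<inter> pos_combinations (walk a b 1 0 (Suc (Suc (Suc k))))
      (walk a b 0 1 (Suc (Suc (Suc k))))) \<le> (N div 2 ^ k) ^ 2"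
proof -
  let ?A = "walk a b 1 0 (Suc (Suc (Suc k)))" and ?B = "walk a b 0 1 (Suc (Suc (Suc k)))"
  have ab: "1 \<le> a" "1 \<le> b" "2 \<le> a \<or> 2 \<le> b"
    and "1 \<le> walk a b 1 0 3" "2 \<le> walk a b 1 0 4" "1 \<le> walk a b 0 1 3" "2 \<le> walk a b 0 1 4"
    using assms by (auto simp: candidate_pairs_def walk_numeral)
  then have "2 ^ k \<le> ?A" "2 ^ k \<le> ?B"
    using walk_ge_pow2[OF ab] by blast+
  moreover have "0 < (2::nat) ^ k"
    by simp
  ultimately have "1 \<le> ?A" "1 \<le> ?B"
    by linarith+
  then have "card ({..N} \<inter> pos_combinations ?A ?B) \<le> (N div ?A) * (N div ?B)"
    by (rule card_pos_combinations_le)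
  also have "\<dots> \<le> (N div 2 ^ k) * (N div 2 ^ k)"
    using \<open>2 ^ k \<le> ?A\<close> \<open>2 ^ k \<le> ?B\<close> \<open>0 < 2 ^ k\<close> by (intro mult_le_mono div_le_mono2)
  finally show ?thesis
    by (simp add: power2_eq_square)
qed

definition exceptional_set :: "nat \<Rightarrow> nat set" where
  "exceptional_set N = {n. 1 \<le> n \<and> n \<le> N \<and> S_set n \<noteq> {(1, 1)}}"

lemma exceptional_set_subset:
  assumes "1 \<le> k"
  shows "exceptional_set N \<subseteq> {1..fib k * fib (Suc k)} \<union>
    (\<Union>(a, b) \<in> candidate_pairs - {(1, 1)}.
      {..N} \<inter> pos_combinations (walk a b 1 0 (Suc (Suc k))) (walk a b 0 1 (Suc (Suc k))))"
    (is "_ \<subseteq> _ \<union> ?U")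
proof
  fix n assume n: "n \<in> exceptional_set N"
  show "n \<in> {1..fib k * fib (Suc k)} \<union> ?U"
  proof (cases "n \<le> fib k * fib (Suc k)")
    case True
    with n show ?thesis
      by (simp add: exceptional_set_def)
  next
    case False
    have "0 < fib k * fib (Suc k)"
      using fib_neq_0_nat assms by simp
    with False have "2 \<le> n"
      by linarith
    then obtain a b where ab: "(a, b) \<in> candidate_pairs - {(1, 1)}"
      "max_index 1 1 n \<le> max_index a b n"
      using S_set_eq_1_1_if_candidates_less[of n] n by (force simp: exceptional_set_def not_less)
    have "Suc (Suc k) \<le> max_index 1 1 n"
      using False by (intro Suc_Suc_le_max_index_1_1[OF assms]) simp
    with ab(2) have "Suc (Suc k) \<le> max_index a b n"
      by linarith
    then have "n \<in> pos_combinations (walk a b 1 0 (Suc (Suc k))) (walk a b 0 1 (Suc (Suc k)))"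
      using le_max_index_iff[of a b n "Suc (Suc k)"] ab(1) \<open>2 \<le> n\<close>
      by (auto simp: candidate_pairs_def)
    with ab(1) n show ?thesis
      by (auto simp: exceptional_set_def)
  qed
qed

lemma card_exceptional_set_le: "card (exceptional_set N) \<le> 9 ^ i + 4 * (N div 4 ^ i) ^ 2"
proof -
  let ?k = "Suc (2 * i)"
  let ?C = "candidate_pairs - {(1, 1)}"
  let ?P = "\<lambda>(a, b). {..N} \<inter>
    pos_combinations (walk a b 1 0 (Suc (Suc ?k))) (walk a b 0 1 (Suc (Suc ?k)))"
  have "card (exceptional_set N) \<le> card ({1..fib ?k * fib (Suc ?k)} \<union> \<Union> (?P ` ?C))"
    using exceptional_set_subset[of ?k N] by (intro card_mono) (auto simp: candidate_pairs_def)
  also have "\<dots> \<le> card {1..fib ?k * fib (Suc ?k)} + card (\<Union> (?P ` ?C))"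
    by (rule card_Un_le)
  also have "card {1..fib ?k * fib (Suc ?k)} \<le> 9 ^ i"
    using fib_prod_le_pow3[of ?k] by (simp add: power_mult)
  also have "card (\<Union> (?P ` ?C)) \<le> (\<Sum>q\<in>?C. card (?P q))"
    by (rule card_UN_le) (simp add: candidate_pairs_def)
  also have "\<dots> \<le> (\<Sum>q\<in>?C. (N div 4 ^ i) ^ 2)"
  proof (rule sum_mono)
    fix q assume "q \<in> ?C"
    then show "card (?P q) \<le> (N div 4 ^ i) ^ 2"
      using card_candidate_combinations_le[of "fst q" "snd q" N "2 * i"]
      by (simp add: case_prod_beta power_mult)
  qed
  also have "\<dots> = 4 * (N div 4 ^ i) ^ 2"
    by (simp add: candidate_pairs_def)
  finally show ?thesis
    by simp
qed

lemma exceptional_ratio_le: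
  assumes "12 ^ i \<le> N" "N < 12 ^ Suc i"
  shows "real (card (exceptional_set N)) / real N \<le> 49 * (3 / 4) ^ i"
proof -
  have "real (12 ^ i) \<le> real N" "real N \<le> real (12 * 12 ^ i)"
    using assms by (simp_all only: of_nat_le_iff) simp
  then have N12: "(12::real) ^ i \<le> real N" "real N \<le> 12 * 12 ^ i"
    by simp_all
  have N: "0 < real N"
    using N12(1) by (smt (verit) zero_less_power)
  have "real (card (exceptional_set N)) \<le> real (9 ^ i + 4 * (N div 4 ^ i) ^ 2)"
    using card_exceptional_set_le by (simp only: of_nat_le_iff)
  also have "\<dots> \<le> 9 ^ i + 4 * (real N / 4 ^ i) ^ 2"
    using of_nat_div_le_of_nat[of N "4 ^ i"] by (simp add: power_mono)
  finally have "real (card (exceptional_set N)) / real N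
      \<le> (9 ^ i + 4 * (real N / 4 ^ i) ^ 2) / real N"
    using N by (simp add: divide_right_mono)
  also have "\<dots> = 9 ^ i / real N + 4 * real N / 16 ^ i"
    using N by (simp add: field_simps power2_eq_square flip: power_mult_distrib)
  also have "9 ^ i / real N \<le> 9 ^ i / 12 ^ i"
    using N12(1) by (simp add: frac_le)
  also have "4 * real N / 16 ^ i \<le> 4 * (12 * 12 ^ i) / 16 ^ i"
    using N12(2) by (simp add: divide_right_mono)
  also have "(9::real) ^ i / 12 ^ i + 4 * (12 * 12 ^ i) / 16 ^ i
      = 9 ^ i / 12 ^ i + 48 * (12 ^ i / 16 ^ i)"
    by simp
  also have "\<dots> = 49 * (3 / 4) ^ i"
    unfolding power_divide[symmetric] by simp
  finally show ?thesis
    by simp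
qed

lemma exceptional_density_tendsto_zero:
  "(\<lambda>N. real (card (exceptional_set N)) / real N) \<longlonglongrightarrow> 0"
proof (rule LIMSEQ_I)
  fix r :: real
  assume "0 < r"
  then obtain M where M: "(3 / 4 :: real) ^ M < r / 49"
    using real_arch_pow_inv[of "r / 49" "3 / 4"] by auto
  have "norm (real (card (exceptional_set N)) / real N - 0) < r" if "12 ^ M \<le> N" for N
  proof -
    have "1 \<le> (12::nat) ^ M"
      by simp
    with that have "1 \<le> N"
      by linarith
    then obtain i where i: "12 ^ i \<le> N" "N < 12 ^ Suc i"
      using ex_power_ivl1[of 12 N] by auto
    have "(12::nat) ^ M < 12 ^ Suc i"
      using that i(2) by linarith
    then have "M \<le> i"
      using power_less_imp_less_exp[of "12::nat" M "Suc i"] by simp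
    have "norm (real (card (exceptional_set N)) / real N - 0) \<le> 49 * (3 / 4) ^ i"
      using exceptional_ratio_le[OF i] by simp
    also have "\<dots> \<le> 49 * (3 / 4) ^ M"
      using \<open>M \<le> i\<close> by (simp add: power_decreasing)
    also have "\<dots> < r"
      using M by simp
    finally show ?thesis .
  qed
  then show "\<exists>M. \<forall>N \<ge> M. norm (real (card (exceptional_set N)) / real N - 0) < r"
    by blast
qed

lemma S_set_eq_1_1_density:
  "(\<lambda>N. real (card {n. 1 \<le> n \<and> n \<le> N \<and> S_set n = {(1, 1)}}) / real N) \<longlonglongrightarrow> 1"
proof (rule Lim_transform_eventually)
  show "(\<lambda>N. 1 - real (card (exceptional_set N)) / real N) \<longlonglongrightarrow> 1"
    using tendsto_diff[OF tendsto_const exceptional_density_tendsto_zero, of 1] by simp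
  have card_split:
      "card {n. 1 \<le> n \<and> n \<le> N \<and> P n} = N - card {n. 1 \<le> n \<and> n \<le> N \<and> \<not> P n}"
    and card_le: "card {n. 1 \<le> n \<and> n \<le> N \<and> \<not> P n} \<le> N" for N and P :: "nat \<Rightarrow> bool"
  proof -
    have "{n. 1 \<le> n \<and> n \<le> N \<and> \<not> P n} \<subseteq> {1..N}"
      by auto
    moreover have "{n. 1 \<le> n \<and> n \<le> N \<and> P n} = {1..N} - {n. 1 \<le> n \<and> n \<le> N \<and> \<not> P n}"
      by auto
    ultimately show
      "card {n. 1 \<le> n \<and> n \<le> N \<and> P n} = N - card {n. 1 \<le> n \<and> n \<le> N \<and> \<not> P n}"
      and "card {n. 1 \<le> n \<and> n \<le> N \<and> \<not> P n} \<le> N"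
      using card_mono[of "{1..N}"] by (simp_all add: card_Diff_subset finite_subset)
  qed
  have "1 - real (card (exceptional_set N)) / real N
      = real (card {n. 1 \<le> n \<and> n \<le> N \<and> S_set n = {(1, 1)}}) / real N" if "1 \<le> N" for N
    using that card_split[of N "\<lambda>n. S_set n = {(1, 1)}"] card_le[of N "\<lambda>n. S_set n = {(1, 1)}"]
    unfolding exceptional_set_def by (simp add: field_simps of_nat_diff)
  then show "\<forall>\<^sub>F N in sequentially. 1 - real (card (exceptional_set N)) / real N
      = real (card {n. 1 \<le> n \<and> n \<le> N \<and> S_set n = {(1, 1)}}) / real N"
    unfolding eventually_sequentially by blast
qed

theorem theorem1p6:
  defines "R \<equiv> {(1,1),(2,1),(1,2),(1,3),(1,4)} :: (nat \<times> nat) set"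
  shows "(\<forall>n::nat. n > 1 \<longrightarrow> S_set n \<subseteq> R)
    \<and> (\<forall>p\<in>R. \<exists>n::nat. n > 1 \<and> p \<in> S_set n)
    \<and> (\<lambda>N. real (card {n::nat. 1 \<le> n \<and> n \<le> N \<and> S_set n = {(1,1)}}) / real N)
         \<longlonglongrightarrow> 1"
proof (intro conjI)
  have R: "R = candidate_pairs"
    unfolding R_def candidate_pairs_def ..
  show "\<forall>n::nat. n > 1 \<longrightarrow> S_set n \<subseteq> R"
    unfolding R using S_set_subset_candidate_pairs by (simp add: Suc_le_eq)
  show "\<forall>p\<in>R. \<exists>n::nat. n > 1 \<and> p \<in> S_set n"
    unfolding R_def
    using pair_1_1_in_S_set_2 pair_2_1_in_S_set_239 pair_1_2_in_S_set_32 pair_1_3_in_S_set_40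
      pair_1_4_in_S_set_5307721328585529
    by (auto intro: exI[where x = 2] exI[where x = 239] exI[where x = 32] exI[where x = 40]
        exI[where x = 5307721328585529])
  show "(\<lambda>N. real (card {n::nat. 1 \<le> n \<and> n \<le> N \<and> S_set n = {(1,1)}}) / real N) \<longlonglongrightarrow> 1"
    by (rule S_set_eq_1_1_density)
qed

end
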